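(* Let $\phi:\mathsf S\to\mathsf T$ be a morphism in $\mathbf{TEmb}$, i.e. a morphism of polynomial endofunctors between two trees. Then each of the three component maps $\phi_0:S_0\to T_0$, $\phi_1:S_1\to T_1$, $\phi_2:S_2\to T_2$ is injective.
   Context: A polynomial endofunctor $\mathsf P=(P_0,P_1,P_2)$ is a diagram of sets $P_0\xleftarrow{s}P_2\xrightarrow{p}P_1\xrightarrow{t}P_0$ in which $p$ has finite fibres. A morphism $\alpha:\mathsf Q\to\mathsf P$ of polynomial endofunctors is a triple of maps $\alpha_0:Q_0\to P_0$, $\alpha_1:Q_1\to P_1$, $\alpha_2:Q_2\to P_2$ commuting with $s,p,t$ and such that the middle square ($Q_2\to Q_1$ over $P_2\to P_1$) is a pullback; these form the category $\mathbf{PolyEnd}$. A tree is a polynomial endofunctor $\mathsf T$ such that (1) $T_0,T_1,T_2$ are finite; (2) $t$ is injective; (3) $s$ is injective and $T_0\setminus s(T_2)$ is a single element, called the root (so $T_0=T_2+\{\mathrm{root}\}$); (4) with $\sigma:T_0\to T_0$ defined by $\sigma(\mathrm{root})=\mathrm{root}$ and $\sigma(e)=t(p(e))$ for $e\in T_2$, for every $x\in T_0$ there is $k\in\mathbb N$ with $\sigma^k(x)=\mathrm{root}$. Elements of $T_0$ are edges, of $T_1$ nodes; input edges of a node $b$ are the elements of $p^{-1}(b)$, $t(b)$ is its output edge. $\mathbf{TEmb}$ is the full subcategory of $\mathbf{PolyEnd}$ whose objects are trees. *)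

theory Defs
  imports Main
begin

text \<open>A polynomial endofunctor P0 <-s- P2 -p-> P1 -t-> P0, with carriers given as sets
  (edges P0 :: 'e set, nodes P1 :: 'n set, P2 :: 'f set) and maps s, p, t.\<close>

record ('e, 'n, 'f) polyend =
  P0 :: "'e set"
  P1 :: "'n set"
  P2 :: "'f set"
  src :: "'f \<Rightarrow> 'e"
  prj :: "'f \<Rightarrow> 'n"
  tgt :: "'n \<Rightarrow> 'e"

definition is_polyend :: "('e, 'n, 'f) polyend \<Rightarrow> bool" where
  "is_polyend P \<longleftrightarrow>
     (\<forall>x\<in>P2 P. src P x \<in> P0 P) \<and>
     (\<forall>x\<in>P2 P. prj P x \<in> P1 P) \<and>
     (\<forall>b\<in>P1 P. tgt P b \<in> P0 P) \<and>
     (\<forall>b\<in>P1 P. finite {x\<in>P2 P. prj P x = b})"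

text \<open>Morphism Q -> P: maps commuting with s, p, t, and the middle square is a pullback,
  i.e. the canonical map Q2 -> Q1 x_{P1} P2 is a bijection.\<close>

definition is_poly_mor ::
  "('e, 'n, 'f) polyend \<Rightarrow> ('e2, 'n2, 'f2) polyend \<Rightarrow>
   ('e \<Rightarrow> 'e2) \<Rightarrow> ('n \<Rightarrow> 'n2) \<Rightarrow> ('f \<Rightarrow> 'f2) \<Rightarrow> bool" where
  "is_poly_mor Q P a0 a1 a2 \<longleftrightarrow>
     (\<forall>x\<in>P0 Q. a0 x \<in> P0 P) \<and>
     (\<forall>x\<in>P1 Q. a1 x \<in> P1 P) \<and>
     (\<forall>x\<in>P2 Q. a2 x \<in> P2 P) \<and>
     (\<forall>x\<in>P2 Q. src P (a2 x) = a0 (src Q x)) \<and>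
     (\<forall>x\<in>P2 Q. prj P (a2 x) = a1 (prj Q x)) \<and>
     (\<forall>b\<in>P1 Q. tgt P (a1 b) = a0 (tgt Q b)) \<and>
     bij_betw (\<lambda>x. (prj Q x, a2 x)) (P2 Q)
        {(b, y). b \<in> P1 Q \<and> y \<in> P2 P \<and> a1 b = prj P y}"

definition tree_root :: "('e, 'n, 'f) polyend \<Rightarrow> 'e" where
  "tree_root T = the_elem (P0 T - src T ` P2 T)"

definition tree_sigma :: "('e, 'n, 'f) polyend \<Rightarrow> 'e \<Rightarrow> 'e" where
  "tree_sigma T x =
     (if x = tree_root T then tree_root T
      else tgt T (prj T (THE y. y \<in> P2 T \<and> src T y = x)))"

definition is_tree :: "('e, 'n, 'f) polyend \<Rightarrow> bool" where
  "is_tree T \<longleftrightarrow>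
     is_polyend T \<and>
     finite (P0 T) \<and> finite (P1 T) \<and> finite (P2 T) \<and>
     inj_on (tgt T) (P1 T) \<and>
     inj_on (src T) (P2 T) \<and>
     (\<exists>r. P0 T - src T ` P2 T = {r}) \<and>
     (\<forall>x\<in>P0 T. \<exists>k::nat. (tree_sigma T ^^ k) x = tree_root T)"

end

theory Submission
  imports Defs
begin

(* Write sigma for the parent map of a tree (an edge goes to the output edge of the node it
   enters; the root is fixed).  The proof has three layers.
   (1) General facts about a single tree: the root is the unique edge that is not a source,
       sigma (src f) = tgt (prj f), sigma is closed on edges, and sigma has no cycles except
       the trivial one at the root (every edge eventually reaches the root).
   (2) For a morphism phi : S -> T between trees: phi0 sends non-root edges to non-root edges
       and commutes with sigma away from the root.  Hence a non-root edge x climbs in j >= 1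
       steps to phi0 (root S), so phi0 x = phi0 (root S) would create a cycle at a non-root
       edge of T; thus only the root maps to phi0 (root S).
   (3) Injectivity of phi0 by induction on the number of steps to the root: two non-root
       edges with equal image are sources of input edges f, g with phi2 f = phi2 g whose
       nodes have equal output edges (induction hypothesis), hence are equal nodes; the
       pullback condition then gives f = g.  Injectivity of phi1, phi2 follows from that of
       phi0 together with injectivity of tgt and src. *)

lemma tree_root_unique:
  assumes "is_tree T"
  shows "P0 T - src T ` P2 T = {tree_root T}"
proof -
  obtain r where r: "P0 T - src T ` P2 T = {r}"
    using assms unfolding is_tree_def by blast
  then show ?thesis unfolding tree_root_def by simp
qed

lemma tree_root_in: "is_tree T \<Longrightarrow> tree_root T \<in> P0 T"
  using tree_root_unique by blast

lemma tree_root_not_src: "is_tree T \<Longrightarrow> f \<in> P2 T \<Longrightarrow> src T f \<noteq> tree_root T"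
  using tree_root_unique by blast

lemma tree_nonroot_src:
  assumes "is_tree T" "x \<in> P0 T" "x \<noteq> tree_root T"
  obtains f where "f \<in> P2 T" "x = src T f"
  using tree_root_unique[OF assms(1)] assms(2,3) by blast

lemma tree_reaches_root: "is_tree T \<Longrightarrow> x \<in> P0 T \<Longrightarrow> \<exists>k. (tree_sigma T ^^ k) x = tree_root T"
  unfolding is_tree_def by blast

lemma tree_sigma_pow_root: "(tree_sigma T ^^ n) (tree_root T) = tree_root T"
  by (induction n) (simp_all add: tree_sigma_def)

lemma tree_sigma_pow_root_mono:
  assumes "(tree_sigma T ^^ k) x = tree_root T" "k \<le> n"
  shows "(tree_sigma T ^^ n) x = tree_root T"
proof -
  obtain d where "n = d + k" using le_Suc_ex[OF assms(2)] by (auto simp: add.commute)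
  then have "(tree_sigma T ^^ n) x = (tree_sigma T ^^ d) ((tree_sigma T ^^ k) x)"
    by (simp add: funpow_add)
  then show ?thesis using assms(1) by (simp add: tree_sigma_pow_root)
qed

lemma tree_sigma_src:
  assumes "is_tree T" "f \<in> P2 T"
  shows "tree_sigma T (src T f) = tgt T (prj T f)"
proof -
  have "inj_on (src T) (P2 T)" using assms(1) unfolding is_tree_def by blast
  then have "(THE y. y \<in> P2 T \<and> src T y = src T f) = f"
    using assms(2) by (auto dest: inj_onD)
  then show ?thesis using tree_root_not_src[OF assms] unfolding tree_sigma_def by simp
qed

lemma tree_sigma_in:
  assumes "is_tree T" "x \<in> P0 T"
  shows "tree_sigma T x \<in> P0 T"
proof (cases "x = tree_root T")
  case True
  then show ?thesis using tree_root_in[OF assms(1)] by (simp add: tree_sigma_def)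
next
  case False
  then obtain f where f: "f \<in> P2 T" "x = src T f" using tree_nonroot_src[OF assms] by blast
  have "is_polyend T" using assms(1) unfolding is_tree_def by blast
  then have "prj T f \<in> P1 T" "\<forall>b\<in>P1 T. tgt T b \<in> P0 T"
    using f(1) unfolding is_polyend_def by blast+
  then have "tgt T (prj T f) \<in> P0 T" by blast
  then show ?thesis using tree_sigma_src[OF assms(1) f(1)] f(2) by simp
qed

lemma tree_no_cycle:
  assumes "is_tree T" "x \<in> P0 T" "(tree_sigma T ^^ j) x = x" "j \<ge> 1"
  shows "x = tree_root T"
proof -
  have periodic: "(tree_sigma T ^^ (j * i)) x = x" for i
    by (induction i) (simp_all add: funpow_add assms(3))
  obtain k where "(tree_sigma T ^^ k) x = tree_root T"
    using tree_reaches_root[OF assms(1,2)] by blast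
  moreover have "k \<le> j * k" using assms(4) by simp
  ultimately have "(tree_sigma T ^^ (j * k)) x = tree_root T"
    by (rule tree_sigma_pow_root_mono)
  then show ?thesis using periodic by simp
qed

locale tree_morphism =
  fixes S :: "('e, 'n, 'f) polyend" and T :: "('e2, 'n2, 'f2) polyend"
    and phi0 :: "'e \<Rightarrow> 'e2" and phi1 :: "'n \<Rightarrow> 'n2" and phi2 :: "'f \<Rightarrow> 'f2"
  assumes S: "is_tree S" and T: "is_tree T" and mor: "is_poly_mor S T phi0 phi1 phi2"
begin

abbreviation "rS \<equiv> tree_root S"
abbreviation "rT \<equiv> tree_root T"
abbreviation "sS \<equiv> tree_sigma S"
abbreviation "sT \<equiv> tree_sigma T"

lemma phi0_in: "x \<in> P0 S \<Longrightarrow> phi0 x \<in> P0 T"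
  and phi2_in: "f \<in> P2 S \<Longrightarrow> phi2 f \<in> P2 T"
  and src_comm: "f \<in> P2 S \<Longrightarrow> src T (phi2 f) = phi0 (src S f)"
  and prj_comm: "f \<in> P2 S \<Longrightarrow> prj T (phi2 f) = phi1 (prj S f)"
  and tgt_comm: "b \<in> P1 S \<Longrightarrow> tgt T (phi1 b) = phi0 (tgt S b)"
  using mor unfolding is_poly_mor_def by blast+

lemma pullback_inj: "inj_on (\<lambda>f. (prj S f, phi2 f)) (P2 S)"
  using mor bij_betw_imp_inj_on unfolding is_poly_mor_def by blast

lemma S_polyend: "f \<in> P2 S \<Longrightarrow> prj S f \<in> P1 S" "f \<in> P2 S \<Longrightarrow> src S f \<in> P0 S"
    "b \<in> P1 S \<Longrightarrow> tgt S b \<in> P0 S"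
  using S unfolding is_tree_def is_polyend_def by blast+

lemma S_src_inj: "inj_on (src S) (P2 S)" and S_tgt_inj: "inj_on (tgt S) (P1 S)"
  and T_src_inj: "inj_on (src T) (P2 T)"
  using S T unfolding is_tree_def by blast+

text \<open>Non-root edges are sources, and images of sources are sources, so not the root.\<close>

lemma phi0_nonroot:
  assumes "x \<in> P0 S" "x \<noteq> rS"
  shows "phi0 x \<noteq> rT"
proof -
  obtain f where f: "f \<in> P2 S" "x = src S f" using tree_nonroot_src[OF S assms] by blast
  then have "phi0 x = src T (phi2 f)" using src_comm by simp
  then show ?thesis using tree_root_not_src[OF T phi2_in[OF f(1)]] by simp
qed

lemma sigma_comm:
  assumes "x \<in> P0 S" "x \<noteq> rS"
  shows "sT (phi0 x) = phi0 (sS x)"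
proof -
  obtain f where f: "f \<in> P2 S" "x = src S f" using tree_nonroot_src[OF S assms] by blast
  have "sT (phi0 x) = sT (src T (phi2 f))" using src_comm f by simp
  also have "\<dots> = tgt T (prj T (phi2 f))" using tree_sigma_src[OF T phi2_in[OF f(1)]] .
  also have "\<dots> = phi0 (tgt S (prj S f))" using prj_comm tgt_comm S_polyend f by simp
  also have "\<dots> = phi0 (sS x)" using tree_sigma_src[OF S f(1)] f by simp
  finally show ?thesis .
qed

lemma climbs_to_root_image:
  assumes "x \<in> P0 S" "x \<noteq> rS" "(sS ^^ k) x = rS"
  shows "\<exists>j\<ge>1. (sT ^^ j) (phi0 x) = phi0 rS"
  using assms
proof (induction k arbitrary: x)
  case 0
  then show ?case by simp
next
  case (Suc k)
  have step: "(sT ^^ Suc j) (phi0 x) = (sT ^^ j) (phi0 (sS x))" for j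
    using sigma_comm[OF Suc.prems(1,2)] by (simp add: funpow_swap1)
  show ?case
  proof (cases "sS x = rS")
    case True
    then show ?thesis using step[of 0] by (intro exI[of _ 1]) simp
  next
    case False
    have "(sS ^^ k) (sS x) = rS" using Suc.prems(3) by (simp add: funpow_swap1)
    then obtain j where "(sT ^^ j) (phi0 (sS x)) = phi0 rS"
      using Suc.IH[OF tree_sigma_in[OF S Suc.prems(1)] False] by blast
    then show ?thesis using step by (intro exI[of _ "Suc j"]) simp
  qed
qed

text \<open>Only the root is sent to the image of the root; otherwise \<open>T\<close> would contain a cycle.\<close>

lemma phi0_root_fibre:
  assumes "x \<in> P0 S" "phi0 x = phi0 rS"
  shows "x = rS"
proof (rule ccontr)
  assume x: "x \<noteq> rS"
  obtain k where "(sS ^^ k) x = rS" using tree_reaches_root[OF S assms(1)] by blast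
  then obtain j where "j \<ge> 1" "(sT ^^ j) (phi0 rS) = phi0 rS"
    using climbs_to_root_image[OF assms(1) x] assms(2) by auto
  then have "phi0 rS = rT" using tree_no_cycle[OF T phi0_in[OF tree_root_in[OF S]]] by blast
  then show False using phi0_nonroot[OF assms(1) x] assms(2) by simp
qed

lemma phi0_inj_depth:
  assumes "x \<in> P0 S" "y \<in> P0 S" "(sS ^^ n) x = rS" "(sS ^^ n) y = rS" "phi0 x = phi0 y"
  shows "x = y"
  using assms
proof (induction n arbitrary: x y)
  case 0
  then show ?case by simp
next
  case (Suc n)
  consider "x = rS" | "y = rS" | "x \<noteq> rS" "y \<noteq> rS" by blast
  then show ?case
  proof cases
    case 1
    then show ?thesis using phi0_root_fibre[OF Suc.prems(2)] Suc.prems(5) by simp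
  next
    case 2
    then show ?thesis using phi0_root_fibre[OF Suc.prems(1)] Suc.prems(5) by simp
  next
    case 3
    obtain f where f: "f \<in> P2 S" "x = src S f" using tree_nonroot_src[OF S Suc.prems(1) 3(1)] .
    obtain g where g: "g \<in> P2 S" "y = src S g" using tree_nonroot_src[OF S Suc.prems(2) 3(2)] .
    have "src T (phi2 f) = src T (phi2 g)" using src_comm f g Suc.prems(5) by simp
    then have same_image: "phi2 f = phi2 g"
      using T_src_inj phi2_in f g by (meson inj_onD)
    have "phi0 (sS x) = phi0 (sS y)"
      using sigma_comm[OF Suc.prems(1) 3(1)] sigma_comm[OF Suc.prems(2) 3(2)] Suc.prems(5)
      by simp
    moreover have "(sS ^^ n) (sS x) = rS" "(sS ^^ n) (sS y) = rS"
      using Suc.prems(3,4) by (simp_all add: funpow_swap1)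
    ultimately have "sS x = sS y"
      using Suc.IH[OF tree_sigma_in[OF S Suc.prems(1)] tree_sigma_in[OF S Suc.prems(2)]] by blast
    then have "tgt S (prj S f) = tgt S (prj S g)"
      using tree_sigma_src[OF S f(1)] tree_sigma_src[OF S g(1)] f(2) g(2) by simp
    then have same_node: "prj S f = prj S g"
      using S_tgt_inj S_polyend f g by (meson inj_onD)
    have "f = g" using pullback_inj same_node same_image f g by (auto dest: inj_onD)
    then show ?thesis using f g by simp
  qed
qed

lemma phi0_inj: "inj_on phi0 (P0 S)"
proof (rule inj_onI)
  fix x y assume x: "x \<in> P0 S" and y: "y \<in> P0 S" and eq: "phi0 x = phi0 y"
  obtain kx where "(sS ^^ kx) x = rS" using tree_reaches_root[OF S x] by blast
  then have kx: "(sS ^^ (kx + ky)) x = rS" for ky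
    by (rule tree_sigma_pow_root_mono) simp
  obtain ky where "(sS ^^ ky) y = rS" using tree_reaches_root[OF S y] by blast
  then have "(sS ^^ (kx + ky)) y = rS"
    by (rule tree_sigma_pow_root_mono) simp
  then show "x = y" using phi0_inj_depth[OF x y kx] eq by blast
qed

lemma phi2_inj: "inj_on phi2 (P2 S)"
proof (rule inj_onI)
  fix f g assume f: "f \<in> P2 S" and g: "g \<in> P2 S" and "phi2 f = phi2 g"
  then have "phi0 (src S f) = phi0 (src S g)" using src_comm[OF f] src_comm[OF g] by simp
  then have "src S f = src S g" using phi0_inj S_polyend f g by (meson inj_onD)
  then show "f = g" using S_src_inj f g by (meson inj_onD)
qed

lemma phi1_inj: "inj_on phi1 (P1 S)"
proof (rule inj_onI)
  fix b c assume b: "b \<in> P1 S" and c: "c \<in> P1 S" and "phi1 b = phi1 c"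
  then have "phi0 (tgt S b) = phi0 (tgt S c)" using tgt_comm[OF b] tgt_comm[OF c] by simp
  then have "tgt S b = tgt S c" using phi0_inj S_polyend b c by (meson inj_onD)
  then show "b = c" using S_tgt_inj b c by (meson inj_onD)
qed

end

theorem mainTheorem1:
  fixes S :: "('e, 'n, 'f) polyend" and T :: "('e2, 'n2, 'f2) polyend"
    and phi0 :: "'e \<Rightarrow> 'e2" and phi1 :: "'n \<Rightarrow> 'n2" and phi2 :: "'f \<Rightarrow> 'f2"
  assumes "is_tree S" and "is_tree T" and "is_poly_mor S T phi0 phi1 phi2"
  shows "inj_on phi0 (P0 S) \<and> inj_on phi1 (P1 S) \<and> inj_on phi2 (P2 S)"
proof -
  interpret tree_morphism S T phi0 phi1 phi2
    using assms by unfold_locales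
  show ?thesis using phi0_inj phi1_inj phi2_inj by blast
qed

end
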